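(* Let $\mathbb{F}$ be an algebraically closed field of characteristic zero and let $(\mathfrak{g},[\cdot,\cdot],T)$ be a finite-dimensional nilpotent Hom-Lie algebra over $\mathbb{F}$ whose twist map $T$ is equivariant. Define $[x,y]_{\mathrm{Lie}}=T([x,y])$ for $x,y\in\mathfrak{g}$ (this is a Lie bracket on $\mathfrak{g}$). Then $(\mathfrak{g},[\cdot,\cdot]_{\mathrm{Lie}})$ is a nilpotent Lie algebra.
   Context: A Hom-Lie algebra $(\mathfrak{g},[\cdot,\cdot],T)$ is a vector space with a skew-symmetric bilinear map $[\cdot,\cdot]$ and a linear map $T$ (twist map) satisfying $[T(x),[y,z]]+[T(y),[z,x]]+[T(z),[x,y]]=0$ for all $x,y,z$. $T$ is equivariant if $T([x,y])=[T(x),y]$ for all $x,y$. Set $\mathfrak{g}^2=[\mathfrak{g},\mathfrak{g}]$ and $\mathfrak{g}^{n+1}=[\mathfrak{g},\mathfrak{g}^n]$ (spans of brackets); the Hom-Lie algebra is nilpotent if $\mathfrak{g}^m=0$ for some $m\in\mathbb{N}$. *)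

theory Defs
  imports Main "HOL-Computational_Algebra.Polynomial"
begin

definition alg_closed_field :: "'a::field itself \<Rightarrow> bool" where
  "alg_closed_field _ \<longleftrightarrow> (\<forall>p::'a poly. degree p > 0 \<longrightarrow> (\<exists>x. poly p x = 0))"

definition fin_dim_vs :: "('a::field \<Rightarrow> 'v::ab_group_add \<Rightarrow> 'v) \<Rightarrow> bool" where
  "fin_dim_vs scale \<longleftrightarrow> vector_space scale \<and>
     (\<exists>B. finite B \<and> module.span scale B = UNIV)"

definition bilinear_map :: "('a::field \<Rightarrow> 'v::ab_group_add \<Rightarrow> 'v) \<Rightarrow> ('v \<Rightarrow> 'v \<Rightarrow> 'v) \<Rightarrow> bool" where
  "bilinear_map scale br \<longleftrightarrow>
     (\<forall>x. Vector_Spaces.linear scale scale (\<lambda>y. br x y)) \<and>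
     (\<forall>y. Vector_Spaces.linear scale scale (\<lambda>x. br x y))"

definition skew_symmetric :: "('v::ab_group_add \<Rightarrow> 'v \<Rightarrow> 'v) \<Rightarrow> bool" where
  "skew_symmetric br \<longleftrightarrow> (\<forall>x y. br x y = - br y x)"

definition hom_lie_algebra ::
  "('a::field \<Rightarrow> 'v::ab_group_add \<Rightarrow> 'v) \<Rightarrow> ('v \<Rightarrow> 'v \<Rightarrow> 'v) \<Rightarrow> ('v \<Rightarrow> 'v) \<Rightarrow> bool" where
  "hom_lie_algebra scale br T \<longleftrightarrow> vector_space scale \<and>
     bilinear_map scale br \<and> skew_symmetric br \<and> Vector_Spaces.linear scale scale T \<and>
     (\<forall>x y z. br (T x) (br y z) + br (T y) (br z x) + br (T z) (br x y) = 0)"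

definition lie_algebra ::
  "('a::field \<Rightarrow> 'v::ab_group_add \<Rightarrow> 'v) \<Rightarrow> ('v \<Rightarrow> 'v \<Rightarrow> 'v) \<Rightarrow> bool" where
  "lie_algebra scale br \<longleftrightarrow> vector_space scale \<and>
     bilinear_map scale br \<and> skew_symmetric br \<and>
     (\<forall>x y z. br x (br y z) + br y (br z x) + br z (br x y) = 0)"

definition equivariant :: "('v \<Rightarrow> 'v \<Rightarrow> 'v) \<Rightarrow> ('v \<Rightarrow> 'v) \<Rightarrow> bool" where
  "equivariant br T \<longleftrightarrow> (\<forall>x y. T (br x y) = br (T x) y)"

text \<open>Lower central series, shifted: lcs scale br n is g^(n+1);
  g^1 = g, g^(n+1) = span of brackets [x, y] with y in g^n.\<close>
fun lcs :: "('a::field \<Rightarrow> 'v::ab_group_add \<Rightarrow> 'v) \<Rightarrow> ('v \<Rightarrow> 'v \<Rightarrow> 'v) \<Rightarrow> nat \<Rightarrow> 'v set" where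
  "lcs scale br 0 = UNIV"
| "lcs scale br (Suc n) = module.span scale {br x y | x y. y \<in> lcs scale br n}"

definition nilpotent_bracket ::
  "('a::field \<Rightarrow> 'v::ab_group_add \<Rightarrow> 'v) \<Rightarrow> ('v \<Rightarrow> 'v \<Rightarrow> 'v) \<Rightarrow> bool" where
  "nilpotent_bracket scale br \<longleftrightarrow> (\<exists>m. lcs scale br m = {0})"

end

theory Submission
  imports Defs
begin

text \<open>Equivariance together with skew-symmetry lets T pass into either argument of a bracket.
  Hence T [x, T [y, z]] = T (T [x, [y, z]]) = T [T x, [y, z]], so the Jacobi identity of the
  bracket T [-, -] is T applied to the Hom-Jacobi identity. Moreover T [x, y] = [T x, y], so
  every bracket of the new algebra is a bracket of the old one with the same right argument,
  and the lower central series of the new bracket lies inside the old one.\<close>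

lemma equivariant_bracket_right:
  assumes "skew_symmetric br" and "equivariant br T"
    and "Vector_Spaces.linear scale scale T"
  shows "T (br x y) = br x (T y)"
proof -
  interpret T: Vector_Spaces.linear scale scale T by (rule assms(3))
  have "T (br x y) = T (- br y x)"
    using assms(1) unfolding skew_symmetric_def by metis
  also have "\<dots> = - br (T y) x"
    using assms(2) unfolding equivariant_def by (simp add: T.neg)
  also have "\<dots> = br x (T y)"
    using assms(1) unfolding skew_symmetric_def by metis
  finally show ?thesis .
qed

lemma lie_algebra_twisted_bracket:
  assumes hom_lie: "hom_lie_algebra scale br T" and equiv: "equivariant br T"
  shows "lie_algebra scale (\<lambda>x y. T (br x y))"
proof -
  have vs: "vector_space scale" and bl: "bilinear_map scale br"
    and skew: "skew_symmetric br" and lin: "Vector_Spaces.linear scale scale T"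
    and hom_jacobi: "\<And>x y z. br (T x) (br y z) + br (T y) (br z x) + br (T z) (br x y) = 0"
    using hom_lie unfolding hom_lie_algebra_def by auto
  interpret T: Vector_Spaces.linear scale scale T by (rule lin)
  have twist: "T (br x (T w)) = T (br (T x) w)" for x w
  proof -
    have "br x (T w) = T (br x w)"
      using equivariant_bracket_right[OF skew equiv lin] by simp
    moreover have "br (T x) w = T (br x w)"
      using equiv unfolding equivariant_def by simp
    ultimately show ?thesis by simp
  qed
  have "bilinear_map scale (\<lambda>x y. T (br x y))"
    using bl lin unfolding bilinear_map_def
    by (auto intro: Vector_Spaces.linear_compose[unfolded o_def])
  moreover have "skew_symmetric (\<lambda>x y. T (br x y))"
    unfolding skew_symmetric_def
  proof (intro allI)
    fix x y
    have "br x y = - br y x"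
      using skew unfolding skew_symmetric_def by blast
    then show "T (br x y) = - T (br y x)" by (simp add: T.neg)
  qed
  moreover have "T (br x (T (br y z))) + T (br y (T (br z x))) + T (br z (T (br x y))) = 0"
    for x y z
    using arg_cong[OF hom_jacobi[of x y z], of T] by (simp add: twist T.add)
  ultimately show ?thesis
    using vs unfolding lie_algebra_def by blast
qed

lemma zero_in_lcs:
  assumes "vector_space scale"
  shows "0 \<in> lcs scale br n"
proof -
  interpret vector_space scale by (rule assms)
  show ?thesis by (cases n) (simp_all add: span_zero)
qed

lemma lcs_mono_bracket:
  assumes "vector_space scale" and "\<And>x y. \<exists>x'. br' x y = br x' y"
  shows "lcs scale br' n \<subseteq> lcs scale br n"
proof (induction n)
  case 0
  show ?case by simp
next
  case (Suc n)
  interpret vector_space scale by (rule assms(1))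
  have "{br' x y | x y. y \<in> lcs scale br' n} \<subseteq> {br x y | x y. y \<in> lcs scale br n}"
    using Suc assms(2) by blast
  then show ?case by (simp add: span_mono)
qed

lemma nilpotent_bracket_mono:
  assumes "vector_space scale" and "\<And>x y. \<exists>x'. br' x y = br x' y"
    and "nilpotent_bracket scale br"
  shows "nilpotent_bracket scale br'"
proof -
  obtain m where m: "lcs scale br m = {0}"
    using assms(3) unfolding nilpotent_bracket_def by blast
  have "lcs scale br' m \<subseteq> {0}"
    using lcs_mono_bracket[where br = br and br' = br' and n = m, OF assms(1,2)] unfolding m .
  then have "lcs scale br' m = {0}"
    using zero_in_lcs[OF assms(1)] by blast
  then show ?thesis
    unfolding nilpotent_bracket_def by blast
qed

theorem proposition3p1:
  fixes scale :: "'a::field_char_0 \<Rightarrow> 'v::ab_group_add \<Rightarrow> 'v"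
    and br :: "'v \<Rightarrow> 'v \<Rightarrow> 'v"
    and T :: "'v \<Rightarrow> 'v"
  assumes "alg_closed_field TYPE('a)"
    and "fin_dim_vs scale"
    and "hom_lie_algebra scale br T"
    and "nilpotent_bracket scale br"
    and "equivariant br T"
  shows "lie_algebra scale (\<lambda>x y. T (br x y)) \<and> nilpotent_bracket scale (\<lambda>x y. T (br x y))"
proof
  show "lie_algebra scale (\<lambda>x y. T (br x y))"
    using lie_algebra_twisted_bracket[OF assms(3,5)] .
  have "vector_space scale"
    using assms(3) unfolding hom_lie_algebra_def by simp
  moreover have "\<exists>x'. T (br x y) = br x' y" for x y
    using assms(5) unfolding equivariant_def by blast
  ultimately show "nilpotent_bracket scale (\<lambda>x y. T (br x y))"
    by (rule nilpotent_bracket_mono[OF _ _ assms(4)])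
qed

end
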